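(* No consistently-dimensioned expression fails because of dimension: for every expression $e$ of a static program and every state $\Gamma$, if $\#(e) \sqsubset \top$ then no configuration $\chi$ with $((e, \emptyset)\ |\ \Gamma) \to^{*} \chi$ fails because of dimension.
   Context: Setting: the core language $\epsilon_0$ (expressions: variables, constants, let-blocks binding bundle components, procedure calls, primitive calls, conditionals, bundles of multiple values, fork, join), evaluated from the initial configuration $(e,\emptyset)\ |\ \Gamma$ (main stack holding $e$ with empty local environment, value stack holding one value separator $|$) by a small-step reduction relation $\to$, with $\to^*$ its reflexive-transitive closure. A configuration fails because of dimension when the value stack does not have the shape required by the contractive rule of the holed expression on top of the main stack: e.g. a let receives a bundle with fewer values than bound variables, a procedure/fork/primitive call or bundle receives a wrong number of one-value bundles, or a conditional/join discriminand is not a one-value bundle. Dimensions live in the flat lattice $\mathbb{N}\cup\{\bot,\top\}$ with $\bot\sqsubset\lfloor n\rfloor\sqsubset\top$; $\#(e)$ is a static inference of the bundle size $e$ evaluates to (variables/constants/fork/join $\lfloor1\rfloor$, bundles of $n$ single-valued items $\lfloor n\rfloor$, primitives their out-dimension, procedure calls the procedure's least-fixpoint out-dimension, let the dimension of its body, conditionals the join of branch dimensions, and $\top$ whenever a side condition such as arity or single-valuedness of sub-expressions fails). An expression is consistently-dimensioned if $\#(e)\sqsubset\top$. Programs considered are static (no self-modification of global or procedure definitions). *)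

theory Defs
  imports Main "HOL-Library.Lattice_Constructions"
begin

type_synonym vname = string
type_synonym pname = string
type_synonym primname = string

datatype val = VInt int | VBool bool | VThread nat

datatype expr =
    EVar vname
  | EConst val
  | ELet "vname list" expr expr      \<comment> \<open>let x1 ... xk = e1 in e2 (binds bundle components)\<close>
  | ECall pname "expr list"
  | EPrim primname "expr list"
  | EIf expr expr expr
  | EBundle "expr list"
  | EFork pname "expr list"
  | EJoin expr

text \<open>A primitive: in-arity, out-dimension, and (partial) semantics giving the i-th output.\<close>
type_synonym primsig = "nat \<times> nat \<times> (val list \<Rightarrow> (nat \<Rightarrow> val) option)"

text \<open>A (static) program: procedure definitions and primitives. Nothing in the
  semantics can modify them, so programs are static by construction.\<close>
record program =
  procs :: "pname \<Rightarrow> (vname list \<times> expr) option"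
  prims :: "primname \<Rightarrow> primsig option"

text \<open>The state Gamma: global definitions (read-only).\<close>
type_synonym state = "vname \<Rightarrow> val option"

type_synonym env = "vname \<Rightarrow> val option"

text \<open>Holed expressions (the continuation part of a compound expression).\<close>
datatype hole =
    LetH "vname list" expr
  | CallH pname nat
  | PrimH primname nat
  | IfH expr expr
  | BundleH nat
  | ForkH pname nat
  | JoinH

text \<open>Main-stack frames: evaluate an expression; push a value separator and then
  evaluate a sub-expression; or a holed expression awaiting its sub-results.\<close>
datatype frame = Ev expr env | Sub expr env | Hole hole env

datatype vitem = Sep | V val

type_synonym thread = "frame list \<times> vitem list"

type_synonym config = "thread \<times> (nat \<Rightarrow> thread option) \<times> state"

text \<open>Pop k one-value bundles from the value stack (arguments returned in order).\<close>
fun pop1 :: "nat \<Rightarrow> vitem list \<Rightarrow> (val list \<times> vitem list) option" where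
  "pop1 0 vs = Some ([], vs)"
| "pop1 (Suc k) (V v # Sep # vs) =
     (case pop1 k vs of Some (as, r) \<Rightarrow> Some (as @ [v], r) | None \<Rightarrow> None)"
| "pop1 (Suc k) _ = None"

text \<open>Pop the topmost bundle (values above the topmost separator, in order).\<close>
fun topb :: "vitem list \<Rightarrow> (val list \<times> vitem list) option" where
  "topb [] = None"
| "topb (Sep # r) = Some ([], r)"
| "topb (V v # r) = (case topb r of Some (ws, r') \<Rightarrow> Some (ws @ [v], r') | None \<Rightarrow> None)"

definition lookup :: "env \<Rightarrow> state \<Rightarrow> vname \<Rightarrow> val option" where
  "lookup \<rho> \<Gamma> x = (case \<rho> x of Some v \<Rightarrow> Some v | None \<Rightarrow> \<Gamma> x)"

inductive tstep :: "program \<Rightarrow> state \<Rightarrow> (nat \<Rightarrow> thread option) \<Rightarrow> thread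
                    \<Rightarrow> thread \<times> (nat \<Rightarrow> thread option) \<Rightarrow> bool"
  for P :: program and \<Gamma> :: state where
  tVar: "lookup \<rho> \<Gamma> x = Some v \<Longrightarrow>
     tstep P \<Gamma> pool (Ev (EVar x) \<rho> # ms, vs) ((ms, V v # vs), pool)"
| tConst: "tstep P \<Gamma> pool (Ev (EConst v) \<rho> # ms, vs) ((ms, V v # vs), pool)"
| tSub: "tstep P \<Gamma> pool (Sub e \<rho> # ms, vs) ((Ev e \<rho> # ms, Sep # vs), pool)"
| tLet: "tstep P \<Gamma> pool (Ev (ELet xs e1 e2) \<rho> # ms, vs)
           ((Sub e1 \<rho> # Hole (LetH xs e2) \<rho> # ms, vs), pool)"
| tLetC: "\<lbrakk> topb vs = Some (ws, r); length xs \<le> length ws \<rbrakk> \<Longrightarrow>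
     tstep P \<Gamma> pool (Hole (LetH xs e2) \<rho> # ms, vs)
       ((Ev e2 (\<rho>(xs [\<mapsto>] take (length xs) ws)) # ms, r), pool)"
| tCall: "tstep P \<Gamma> pool (Ev (ECall f es) \<rho> # ms, vs)
           ((map (\<lambda>e. Sub e \<rho>) es @ Hole (CallH f (length es)) \<rho> # ms, vs), pool)"
| tCallC: "\<lbrakk> procs P f = Some (ps, b); k = length ps; pop1 k vs = Some (as, r) \<rbrakk> \<Longrightarrow>
     tstep P \<Gamma> pool (Hole (CallH f k) \<rho> # ms, vs)
       ((Ev b (Map.empty(ps [\<mapsto>] as)) # ms, r), pool)"
| tPrim: "tstep P \<Gamma> pool (Ev (EPrim p es) \<rho> # ms, vs)
           ((map (\<lambda>e. Sub e \<rho>) es @ Hole (PrimH p (length es)) \<rho> # ms, vs), pool)"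
| tPrimC: "\<lbrakk> prims P p = Some (n, m, F); k = n; pop1 k vs = Some (as, r); F as = Some g \<rbrakk> \<Longrightarrow>
     tstep P \<Gamma> pool (Hole (PrimH p k) \<rho> # ms, vs)
       ((ms, rev (map (\<lambda>i. V (g i)) [0..<m]) @ r), pool)"
| tIf: "tstep P \<Gamma> pool (Ev (EIf c e1 e2) \<rho> # ms, vs)
           ((Sub c \<rho> # Hole (IfH e1 e2) \<rho> # ms, vs), pool)"
| tIfC: "vs = V (VBool bv) # Sep # r \<Longrightarrow>
     tstep P \<Gamma> pool (Hole (IfH e1 e2) \<rho> # ms, vs)
       ((Ev (if bv then e1 else e2) \<rho> # ms, r), pool)"
| tBundle: "tstep P \<Gamma> pool (Ev (EBundle es) \<rho> # ms, vs)
           ((map (\<lambda>e. Sub e \<rho>) es @ Hole (BundleH (length es)) \<rho> # ms, vs), pool)"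
| tBundleC: "pop1 k vs = Some (as, r) \<Longrightarrow>
     tstep P \<Gamma> pool (Hole (BundleH k) \<rho> # ms, vs) ((ms, rev (map V as) @ r), pool)"
| tFork: "tstep P \<Gamma> pool (Ev (EFork f es) \<rho> # ms, vs)
           ((map (\<lambda>e. Sub e \<rho>) es @ Hole (ForkH f (length es)) \<rho> # ms, vs), pool)"
| tForkC: "\<lbrakk> procs P f = Some (ps, b); k = length ps; pop1 k vs = Some (as, r); pool t = None \<rbrakk> \<Longrightarrow>
     tstep P \<Gamma> pool (Hole (ForkH f k) \<rho> # ms, vs)
       ((ms, V (VThread t) # r), pool(t \<mapsto> ([Ev b (Map.empty(ps [\<mapsto>] as))], [Sep])))"
| tJoin: "tstep P \<Gamma> pool (Ev (EJoin e) \<rho> # ms, vs)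
           ((Sub e \<rho> # Hole JoinH \<rho> # ms, vs), pool)"
| tJoinC: "\<lbrakk> vs = V (VThread t) # Sep # r; pool t = Some ([], [V v, Sep]) \<rbrakk> \<Longrightarrow>
     tstep P \<Gamma> pool (Hole JoinH \<rho> # ms, vs) ((ms, V v # r), pool)"

inductive step :: "program \<Rightarrow> config \<Rightarrow> config \<Rightarrow> bool" for P :: program where
  stMain: "tstep P \<Gamma> pool m (m', pool') \<Longrightarrow> step P (m, pool, \<Gamma>) (m', pool', \<Gamma>)"
| stThread: "\<lbrakk> pool t = Some th; tstep P \<Gamma> pool th (th', pool') \<rbrakk> \<Longrightarrow>
     step P (m, pool, \<Gamma>) (m, pool'(t \<mapsto> th'), \<Gamma>)"

definition init_config :: "expr \<Rightarrow> state \<Rightarrow> config" where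
  "init_config e \<Gamma> = (([Ev e Map.empty], [Sep]), Map.empty, \<Gamma>)"

text \<open>The value-stack shape required (as far as dimensions are concerned) by the
  contractive rule of each holed expression.\<close>
fun dim_shape_ok :: "program \<Rightarrow> hole \<Rightarrow> vitem list \<Rightarrow> bool" where
  "dim_shape_ok P (LetH xs e2) vs =
     (\<exists>ws r. topb vs = Some (ws, r) \<and> length xs \<le> length ws)"
| "dim_shape_ok P (CallH f k) vs =
     (case procs P f of Some (ps, b) \<Rightarrow> k = length ps \<and> pop1 k vs \<noteq> None | None \<Rightarrow> True)"
| "dim_shape_ok P (PrimH p k) vs =
     (case prims P p of Some (n, m, F) \<Rightarrow> k = n \<and> pop1 k vs \<noteq> None | None \<Rightarrow> True)"
| "dim_shape_ok P (IfH e1 e2) vs = (pop1 1 vs \<noteq> None)"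
| "dim_shape_ok P (BundleH k) vs = (pop1 k vs \<noteq> None)"
| "dim_shape_ok P (ForkH f k) vs =
     (case procs P f of Some (ps, b) \<Rightarrow> k = length ps \<and> pop1 k vs \<noteq> None | None \<Rightarrow> True)"
| "dim_shape_ok P JoinH vs = (pop1 1 vs \<noteq> None)"

fun thread_fails_dim :: "program \<Rightarrow> thread \<Rightarrow> bool" where
  "thread_fails_dim P (Hole h \<rho> # ms, vs) = (\<not> dim_shape_ok P h vs)"
| "thread_fails_dim P _ = False"

definition fails_dim :: "program \<Rightarrow> config \<Rightarrow> bool" where
  "fails_dim P \<chi> = (case \<chi> of (m, pool, \<Gamma>) \<Rightarrow>
      thread_fails_dim P m \<or> (\<exists>t th. pool t = Some th \<and> thread_fails_dim P th))"

type_synonym dim = "nat flat_complete_lattice"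

abbreviation Fin :: "nat \<Rightarrow> dim" where "Fin n \<equiv> flat_complete_lattice.Value n"
abbreviation DBot :: dim where "DBot \<equiv> flat_complete_lattice.Bot"
abbreviation DTop :: dim where "DTop \<equiv> flat_complete_lattice.Top"

text \<open>Inference relative to an assignment of out-dimensions to procedures.\<close>
fun dimE :: "program \<Rightarrow> (pname \<Rightarrow> dim) \<Rightarrow> expr \<Rightarrow> dim" where
  "dimE P \<pi> (EVar x) = Fin 1"
| "dimE P \<pi> (EConst v) = Fin 1"
| "dimE P \<pi> (ELet xs e1 e2) =
     (case dimE P \<pi> e1 of
        flat_complete_lattice.Value n \<Rightarrow> (if length xs \<le> n then dimE P \<pi> e2 else DTop)
      | flat_complete_lattice.Bot \<Rightarrow> dimE P \<pi> e2
      | flat_complete_lattice.Top \<Rightarrow> DTop)"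
| "dimE P \<pi> (ECall f es) =
     (case procs P f of
        Some (ps, b) \<Rightarrow> (if length es = length ps \<and> (\<forall>d\<in>set (map (dimE P \<pi>) es). d \<le> Fin 1)
                          then \<pi> f else DTop)
      | None \<Rightarrow> DTop)"
| "dimE P \<pi> (EPrim p es) =
     (case prims P p of
        Some (n, m, F) \<Rightarrow> (if length es = n \<and> (\<forall>d\<in>set (map (dimE P \<pi>) es). d \<le> Fin 1)
                            then Fin m else DTop)
      | None \<Rightarrow> DTop)"
| "dimE P \<pi> (EIf c e1 e2) =
     (if dimE P \<pi> c \<le> Fin 1 then sup (dimE P \<pi> e1) (dimE P \<pi> e2) else DTop)"
| "dimE P \<pi> (EBundle es) =
     (if (\<forall>d\<in>set (map (dimE P \<pi>) es). d \<le> Fin 1) then Fin (length es) else DTop)"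
| "dimE P \<pi> (EFork f es) =
     (case procs P f of
        Some (ps, b) \<Rightarrow> (if length es = length ps \<and> (\<forall>d\<in>set (map (dimE P \<pi>) es). d \<le> Fin 1)
                              \<and> \<pi> f \<le> Fin 1
                          then Fin 1 else DTop)
      | None \<Rightarrow> DTop)"
| "dimE P \<pi> (EJoin e) = (if dimE P \<pi> e \<le> Fin 1 then Fin 1 else DTop)"

definition outdims :: "program \<Rightarrow> pname \<Rightarrow> dim" where
  "outdims P = lfp (\<lambda>\<pi> f. case procs P f of Some (ps, b) \<Rightarrow> dimE P \<pi> b | None \<Rightarrow> DBot)"

definition dim :: "program \<Rightarrow> expr \<Rightarrow> dim" where
  "dim P e = dimE P (outdims P) e"

end

theory Submission
  imports Defs
begin

text \<open>Call a thread safe if, assuming every expression still to be evaluated returns a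
  bundle of the size predicted by \<open>#\<close>, each holed expression on its main stack will find the
  value stack in the shape its contractive rule requires. Safety is defined by recursion on
  the main stack in continuation-passing style, holds initially for a consistently-dimensioned
  expression, and is preserved by every reduction step of every thread; for procedure calls
  this uses that the out-dimensions of the procedures are a fixpoint of the inference. A safe
  thread cannot fail because of dimension.\<close>

lemma flat_Top_le_iff: "flat_complete_lattice.Top \<le> x \<longleftrightarrow> x = flat_complete_lattice.Top"
  by (cases x) (simp_all add: less_eq_flat_complete_lattice_def)

lemma flat_le_Bot_iff: "x \<le> flat_complete_lattice.Bot \<longleftrightarrow> x = flat_complete_lattice.Bot"
  by (cases x) (simp_all add: less_eq_flat_complete_lattice_def)

lemma flat_le_Value_iff:
  "x \<le> flat_complete_lattice.Value a \<longleftrightarrow>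
    x = flat_complete_lattice.Bot \<or> x = flat_complete_lattice.Value a"
  by (cases x) (simp_all add: less_eq_flat_complete_lattice_def)

lemma flat_less_Top_iff:
  "x < flat_complete_lattice.Top \<longleftrightarrow> (\<exists>a. x \<le> flat_complete_lattice.Value a)"
  by (cases x) (auto simp: less_flat_complete_lattice_def less_eq_flat_complete_lattice_def)

lemma dimE_mono:
  assumes "\<pi> \<le> \<pi>'"
  shows "dimE P \<pi> e \<le> dimE P \<pi>' e"
proof (induction e)
  case (ELet xs e1 e2)
  then show ?case
    by (cases "dimE P \<pi> e1"; cases "dimE P \<pi>' e1")
       (auto simp: flat_Top_le_iff flat_le_Bot_iff flat_le_Value_iff)
qed (use assms in
      \<open>auto simp: le_fun_def split: option.splits intro: le_supI1 le_supI2 dest: order_trans\<close>)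

lemma dim_body_eq_outdims:
  assumes "procs P f = Some (ps, b)"
  shows "dim P b = outdims P f"
proof -
  let ?F = "\<lambda>\<pi> f. case procs P f of Some (ps, b) \<Rightarrow> dimE P \<pi> b | None \<Rightarrow> DBot"
  have "mono ?F"
    by (rule monoI, rule le_funI) (auto split: option.splits intro: dimE_mono)
  then have "outdims P f = ?F (outdims P) f"
    unfolding outdims_def by (subst lfp_unfold) simp_all
  then show ?thesis
    using assms by (simp add: dim_def)
qed

definition accepts_result :: "program \<Rightarrow> expr \<Rightarrow> (nat \<Rightarrow> vitem list \<Rightarrow> bool) \<Rightarrow> vitem list \<Rightarrow> bool"
  where "accepts_result P e K vs \<longleftrightarrow> (\<exists>n. dim P e \<le> Fin n \<and> K n vs)"

fun frame_safe :: "program \<Rightarrow> frame \<Rightarrow> (nat \<Rightarrow> vitem list \<Rightarrow> bool) \<Rightarrow> vitem list \<Rightarrow> bool" where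
  "frame_safe P (Ev e \<rho>) K vs = accepts_result P e K vs"
| "frame_safe P (Sub e \<rho>) K vs = accepts_result P e K (Sep # vs)"
| "frame_safe P (Hole (LetH xs e2) \<rho>) K vs =
     (\<exists>ws r. topb vs = Some (ws, r) \<and> length xs \<le> length ws \<and> accepts_result P e2 K r)"
| "frame_safe P (Hole (CallH f k) \<rho>) K vs =
     (case procs P f of
        None \<Rightarrow> True
      | Some (ps, b) \<Rightarrow> k = length ps \<and> (\<exists>as r. pop1 k vs = Some (as, r) \<and> accepts_result P b K r))"
| "frame_safe P (Hole (PrimH p k) \<rho>) K vs =
     (case prims P p of
        None \<Rightarrow> True
      | Some (n, m, F) \<Rightarrow> k = n \<and> (\<exists>as r. pop1 k vs = Some (as, r) \<and> K m r))"
| "frame_safe P (Hole (IfH e1 e2) \<rho>) K vs =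
     (\<exists>v r. vs = V v # Sep # r \<and> accepts_result P e1 K r \<and> accepts_result P e2 K r)"
| "frame_safe P (Hole (BundleH k) \<rho>) K vs = (\<exists>as r. pop1 k vs = Some (as, r) \<and> K k r)"
| "frame_safe P (Hole (ForkH f k) \<rho>) K vs =
     (case procs P f of
        None \<Rightarrow> True
      | Some (ps, b) \<Rightarrow> k = length ps \<and> (\<exists>as r. pop1 k vs = Some (as, r) \<and> K 1 r)
                        \<and> dim P b < DTop)"
| "frame_safe P (Hole JoinH \<rho>) K vs = (\<exists>v r. vs = V v # Sep # r \<and> K 1 r)"

text \<open>The continuation \<open>K n r\<close> passed to a frame says that the rest of the main stack is safe
  once a bundle of \<open>n\<close> values has been pushed onto \<open>r\<close>.\<close>

primrec stack_safe :: "program \<Rightarrow> frame list \<Rightarrow> vitem list \<Rightarrow> bool" where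
  "stack_safe P [] vs = True"
| "stack_safe P (fr # ms) vs =
     frame_safe P fr (\<lambda>n r. \<forall>ws. length ws = n \<longrightarrow> stack_safe P ms (map V ws @ r)) vs"

fun thread_safe :: "program \<Rightarrow> thread \<Rightarrow> bool" where
  "thread_safe P (ms, vs) = stack_safe P ms vs"

definition singletons :: "val list \<Rightarrow> vitem list" where
  "singletons ws = concat (map (\<lambda>w. [V w, Sep]) ws)"

lemma pop1_singletons: "length ws = k \<Longrightarrow> pop1 k (singletons ws @ vs) = Some (rev ws, vs)"
  by (induction ws arbitrary: k) (auto simp: singletons_def)

lemma pop1_length: "pop1 k vs = Some (as, r) \<Longrightarrow> length as = k"
  by (induction k vs arbitrary: as r rule: pop1.induct) (auto split: option.splits)

lemma pop1_Suc_0_iff: "pop1 1 vs \<noteq> None \<longleftrightarrow> (\<exists>v r. vs = V v # Sep # r)"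
  by (cases "(1::nat, vs)" rule: pop1.cases) (auto split: option.splits)

lemma topb_bundle: "topb (map V ws @ Sep # vs) = Some (rev ws, vs)"
  by (induction ws) auto

lemma stack_safe_push_arg:
  assumes "dim P e \<le> Fin 1" and "\<And>w. stack_safe P ms (V w # Sep # vs)"
  shows "stack_safe P (Sub e \<rho> # ms) vs"
  using assms by (auto simp: accepts_result_def length_Suc_conv intro!: exI[of _ 1])

lemma stack_safe_push_args:
  assumes "\<forall>e\<in>set es. dim P e \<le> Fin 1"
    and "\<forall>ws. length ws = length es \<longrightarrow> stack_safe P ms (singletons ws @ vs)"
  shows "stack_safe P (map (\<lambda>e. Sub e \<rho>) es @ ms) vs"
  using assms
proof (induction es arbitrary: vs)
  case Nil
  then show ?case by (simp add: singletons_def)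
next
  case (Cons e es)
  have "stack_safe P (map (\<lambda>e. Sub e \<rho>) es @ ms) (V w # Sep # vs)" for w
  proof (rule Cons.IH)
    show "\<forall>e\<in>set es. dim P e \<le> Fin 1"
      using Cons.prems by simp
    show "\<forall>ws. length ws = length es \<longrightarrow> stack_safe P ms (singletons ws @ V w # Sep # vs)"
      using Cons.prems(2)[rule_format, of "_ @ [w]"] by (simp add: singletons_def)
  qed
  then show ?case
    using Cons.prems(1) by (simp add: stack_safe_push_arg del: stack_safe.simps)
qed

lemma stack_safe_return_value:
  assumes "stack_safe P (Ev e \<rho> # ms) vs" and "dim P e = Fin 1"
  shows "stack_safe P ms (V v # vs)"
  using assms by (auto simp: accepts_result_def flat_le_Value_iff dest: spec[of _ "[v]"])

lemma stack_safe_Let_expand: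
  assumes "stack_safe P (Ev (ELet xs e1 e2) \<rho> # ms) vs"
  shows "stack_safe P (Sub e1 \<rho> # Hole (LetH xs e2) \<rho> # ms) vs"
proof -
  obtain n where n: "dim P (ELet xs e1 e2) \<le> Fin n"
    and ms: "\<forall>ws. length ws = n \<longrightarrow> stack_safe P ms (map V ws @ vs)"
    using assms by (auto simp: accepts_result_def)
  show ?thesis
  proof (cases "dim P e1")
    case (Value m)
    with n show ?thesis
      using ms by (auto simp: accepts_result_def dim_def topb_bundle flat_Top_le_iff split: if_splits)
  next
    case Bot
    then have "dim P e2 \<le> Fin n"
      using n by (simp add: dim_def)
    then have "stack_safe P (Hole (LetH xs e2) \<rho> # ms) (map V ws @ Sep # vs)"
      if "length ws = length xs" for ws
      using that ms by (auto simp: accepts_result_def topb_bundle)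
    \<comment> \<open>e1 never returns, so it may be taken to return as many values as are bound\<close>
    with Bot show ?thesis
      by (subst stack_safe.simps)
         (auto simp: accepts_result_def simp del: stack_safe.simps intro!: exI[of _ "length xs"])
  next
    case Top
    with n show ?thesis by (simp add: dim_def flat_Top_le_iff)
  qed
qed

lemma stack_safe_Call_expand:
  assumes "stack_safe P (Ev (ECall f es) \<rho> # ms) vs"
  shows "stack_safe P (map (\<lambda>e. Sub e \<rho>) es @ Hole (CallH f (length es)) \<rho> # ms) vs"
proof -
  obtain n where n: "dim P (ECall f es) \<le> Fin n"
    and ms: "\<forall>ws. length ws = n \<longrightarrow> stack_safe P ms (map V ws @ vs)"
    using assms by (auto simp: accepts_result_def)
  then obtain ps b where pb: "procs P f = Some (ps, b)"
    by (cases "procs P f") (auto simp: dim_def flat_Top_le_iff)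
  with n have "length es = length ps" "\<forall>e\<in>set es. dim P e \<le> Fin 1" "dim P b \<le> Fin n"
    by (auto simp: dim_def dim_body_eq_outdims[OF pb, unfolded dim_def] flat_Top_le_iff
             split: if_splits)
  with pb ms show ?thesis
    by (intro stack_safe_push_args) (auto simp: pop1_singletons accepts_result_def)
qed

lemma stack_safe_Prim_expand:
  assumes "stack_safe P (Ev (EPrim p es) \<rho> # ms) vs"
  shows "stack_safe P (map (\<lambda>e. Sub e \<rho>) es @ Hole (PrimH p (length es)) \<rho> # ms) vs"
proof -
  obtain n where n: "dim P (EPrim p es) \<le> Fin n"
    and ms: "\<forall>ws. length ws = n \<longrightarrow> stack_safe P ms (map V ws @ vs)"
    using assms by (auto simp: accepts_result_def)
  then obtain a m F where pb: "prims P p = Some (a, m, F)"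
    by (cases "prims P p") (auto simp: dim_def flat_Top_le_iff)
  with n have "length es = a" "\<forall>e\<in>set es. dim P e \<le> Fin 1" "m = n"
    by (auto simp: dim_def flat_Top_le_iff flat_le_Value_iff split: if_splits)
  with pb ms show ?thesis
    by (intro stack_safe_push_args) (auto simp: pop1_singletons)
qed

lemma stack_safe_Bundle_expand:
  assumes "stack_safe P (Ev (EBundle es) \<rho> # ms) vs"
  shows "stack_safe P (map (\<lambda>e. Sub e \<rho>) es @ Hole (BundleH (length es)) \<rho> # ms) vs"
proof -
  obtain n where n: "dim P (EBundle es) \<le> Fin n"
    and ms: "\<forall>ws. length ws = n \<longrightarrow> stack_safe P ms (map V ws @ vs)"
    using assms by (auto simp: accepts_result_def)
  then have "\<forall>e\<in>set es. dim P e \<le> Fin 1" "length es = n"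
    by (auto simp: dim_def flat_Top_le_iff flat_le_Value_iff split: if_splits)
  with ms show ?thesis
    by (intro stack_safe_push_args) (auto simp: pop1_singletons)
qed

lemma stack_safe_Fork_expand:
  assumes "stack_safe P (Ev (EFork f es) \<rho> # ms) vs"
  shows "stack_safe P (map (\<lambda>e. Sub e \<rho>) es @ Hole (ForkH f (length es)) \<rho> # ms) vs"
proof -
  obtain n where n: "dim P (EFork f es) \<le> Fin n"
    and ms: "\<forall>ws. length ws = n \<longrightarrow> stack_safe P ms (map V ws @ vs)"
    using assms by (auto simp: accepts_result_def)
  then obtain ps b where pb: "procs P f = Some (ps, b)"
    by (cases "procs P f") (auto simp: dim_def flat_Top_le_iff)
  with n have "length es = length ps" "\<forall>e\<in>set es. dim P e \<le> Fin 1" "dim P b < DTop" "n = 1"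
    by (auto simp: dim_def dim_body_eq_outdims[OF pb, unfolded dim_def] flat_Top_le_iff
          flat_le_Value_iff flat_less_Top_iff split: if_splits)
  with pb ms show ?thesis
    by (intro stack_safe_push_args) (auto simp: pop1_singletons length_Suc_conv)
qed

lemma stack_safe_If_expand:
  assumes "stack_safe P (Ev (EIf c e1 e2) \<rho> # ms) vs"
  shows "stack_safe P (Sub c \<rho> # Hole (IfH e1 e2) \<rho> # ms) vs"
proof -
  obtain n where n: "dim P (EIf c e1 e2) \<le> Fin n"
    and ms: "\<forall>ws. length ws = n \<longrightarrow> stack_safe P ms (map V ws @ vs)"
    using assms by (auto simp: accepts_result_def)
  then have "dim P c \<le> Fin 1" "dim P e1 \<le> Fin n" "dim P e2 \<le> Fin n"
    by (auto simp: dim_def flat_Top_le_iff split: if_splits)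
  with ms show ?thesis
    by (intro stack_safe_push_arg) (auto simp: accepts_result_def)
qed

lemma stack_safe_Join_expand:
  assumes "stack_safe P (Ev (EJoin e) \<rho> # ms) vs"
  shows "stack_safe P (Sub e \<rho> # Hole JoinH \<rho> # ms) vs"
proof -
  obtain n where n: "dim P (EJoin e) \<le> Fin n"
    and ms: "\<forall>ws. length ws = n \<longrightarrow> stack_safe P ms (map V ws @ vs)"
    using assms by (auto simp: accepts_result_def)
  then have "dim P e \<le> Fin 1" "n = 1"
    by (auto simp: dim_def flat_Top_le_iff flat_le_Value_iff split: if_splits)
  with ms show ?thesis
    by (intro stack_safe_push_arg) (auto simp: length_Suc_conv)
qed

lemma tstep_preserves_safety:
  assumes "tstep P \<Gamma> pool th (th', pool')"
    and "thread_safe P th" and "\<forall>t th. pool t = Some th \<longrightarrow> thread_safe P th"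
  shows "thread_safe P th' \<and> (\<forall>t th. pool' t = Some th \<longrightarrow> thread_safe P th)"
  using assms
proof (induction pool th "(th', pool')" arbitrary: th' pool' rule: tstep.induct)
  case (tVar \<rho> x v pool ms vs)
  then show ?case by (auto intro: stack_safe_return_value simp: dim_def)
next
  case (tConst pool v \<rho> ms vs)
  then show ?case by (auto intro: stack_safe_return_value simp: dim_def)
next
  case (tLet pool xs e1 e2 \<rho> ms vs)
  then show ?case by (simp add: stack_safe_Let_expand del: stack_safe.simps)
next
  case (tCall pool f es \<rho> ms vs)
  then show ?case by (simp add: stack_safe_Call_expand del: stack_safe.simps)
next
  case (tPrim pool p es \<rho> ms vs)
  then show ?case by (simp add: stack_safe_Prim_expand del: stack_safe.simps)
next
  case (tPrimC p n m F k vs as r g pool \<rho> ms)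
  have "rev (map (\<lambda>i. V (g i)) [0..<m]) = map V (rev (map g [0..<m]))"
    by (simp add: rev_map)
  with tPrimC show ?case by auto
next
  case (tIf pool c e1 e2 \<rho> ms vs)
  then show ?case by (simp add: stack_safe_If_expand del: stack_safe.simps)
next
  case (tBundle pool es \<rho> ms vs)
  then show ?case by (simp add: stack_safe_Bundle_expand del: stack_safe.simps)
next
  case (tBundleC k vs as r pool \<rho> ms)
  then show ?case by (auto simp: rev_map pop1_length)
next
  case (tFork pool f es \<rho> ms vs)
  then show ?case by (simp add: stack_safe_Fork_expand del: stack_safe.simps)
next
  case (tForkC f ps b k vs as r pool t \<rho> ms)
  then show ?case
    by (auto simp: accepts_result_def flat_less_Top_iff length_Suc_conv)
next
  case (tJoin pool e \<rho> ms vs)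
  then show ?case by (simp add: stack_safe_Join_expand del: stack_safe.simps)
qed (auto simp: length_Suc_conv)

fun config_safe :: "program \<Rightarrow> config \<Rightarrow> bool" where
  "config_safe P (m, pool, \<Gamma>) \<longleftrightarrow> thread_safe P m \<and> (\<forall>t th. pool t = Some th \<longrightarrow> thread_safe P th)"

lemma step_preserves_safety: "step P \<chi> \<chi>' \<Longrightarrow> config_safe P \<chi> \<Longrightarrow> config_safe P \<chi>'"
proof (induction rule: step.induct)
  case (stMain \<Gamma> pool m m' pool')
  then show ?case using tstep_preserves_safety by auto
next
  case (stThread pool t th \<Gamma> th' pool' m)
  then show ?case using tstep_preserves_safety[of P \<Gamma> pool th th' pool'] by auto
qed

lemma frame_safe_Hole_shape_ok: "frame_safe P (Hole h \<rho>) K vs \<Longrightarrow> dim_shape_ok P h vs"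
  by (cases h) (auto simp: pop1_Suc_0_iff split: option.splits)

lemma stack_safe_not_fails_dim: "stack_safe P ms vs \<Longrightarrow> \<not> thread_fails_dim P (ms, vs)"
  by (cases "(P, (ms, vs))" rule: thread_fails_dim.cases) (auto dest: frame_safe_Hole_shape_ok)

lemma init_config_safe: "dim P e < DTop \<Longrightarrow> config_safe P (init_config e \<Gamma>)"
  by (auto simp: init_config_def accepts_result_def flat_less_Top_iff)

theorem mainTheorem8:
  fixes P :: program and e :: expr and \<Gamma> :: state and \<chi> :: config
  assumes "dim P e < DTop"
    and "(step P)\<^sup>*\<^sup>* (init_config e \<Gamma>) \<chi>"
  shows "\<not> fails_dim P \<chi>"
proof -
  have "config_safe P \<chi>"
    using assms(2) init_config_safe[OF assms(1)]
    by (induction rule: rtranclp_induct) (auto intro: step_preserves_safety)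
  then show ?thesis
    by (cases \<chi>) (auto simp: fails_dim_def dest: stack_safe_not_fails_dim)
qed

end
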